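(* Let $I$ be a finite index set of users. For each $i \in I$ let $p_i \in [0,1]$ and $\Delta p_i \in \mathbb{R}$ with $p_i - \Delta p_i \in [0,1]$. Let $\alpha > 0$ and $\beta > 0$, and define $$J = \{ i \in I : \alpha p_i > \beta \Delta p_i \}, \qquad K = \{ i \in I : \alpha p_i < \beta \Delta p_i \}.$$ Suppose that $\sum_{j \in J} p_j = \sum_{k \in K} p_k$ and that this common value is positive. Define $$\mathscr{C}_1 = \frac{\sum_{j\in J} \beta \Delta p_j}{\sum_{j\in J} p_j}, \qquad \mathscr{C}_2 = \frac{\sum_{k\in K} \alpha p_k}{\sum_{k \in K} p_k}.$$ Then $\mathscr{C}_1 < \mathscr{C}_2$.
   Context: Interpretation (real-time bidding for online ads): each $i\in I$ indexes an ad request from a distinct user $u_i$; $p_i$ is the action rate if the advertiser's ad is shown, $p_i - \Delta p_i$ the background action rate if it is not shown, and $\Delta p_i$ the AR lift. In pure second-price auctions with no other candidates, $DSP_1$ bids $\alpha p_i$ (value-based bidding) and $DSP_2$ bids $\beta \Delta p_i$ (lift-based bidding); $DSP_1$ wins users in $J$ at cost $\beta\Delta p_j$ each, and $DSP_2$ wins users in $K$ at cost $\alpha p_k$ each. Under last-touch attribution the expected attributed actions are $\sum_J p_j$ and $\sum_K p_k$ (assumed equal). $\mathscr{C}_1,\mathscr{C}_2$ are the costs per attributed action of $DSP_1$ and $DSP_2$; the theorem says lift-based bidding costs the DSP more per attributed action. *)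

theory Defs
  imports Main Complex_Main
begin

end

theory Submission
  imports Defs
begin

text \<open>Every user in \<open>J\<close> is bought for strictly less than \<open>\<alpha>\<close> times its action rate, so
  \<open>\<C>\<^sub>1 < \<alpha>\<close>; every user in \<open>K\<close> is bought for exactly \<open>\<alpha>\<close> times its action rate, so
  \<open>\<C>\<^sub>2 = \<alpha>\<close>.\<close>

lemma sum_divide_less_if_pointwise_less:
  fixes c w :: "'a \<Rightarrow> real"
  assumes "finite A" and "\<And>a. a \<in> A \<Longrightarrow> c a < r * w a" and "sum w A > 0"
  shows "sum c A / sum w A < r"
proof -
  have "A \<noteq> {}" using assms(3) by auto
  then have "sum c A < (\<Sum>a\<in>A. r * w a)"
    using assms(1,2) by (intro sum_strict_mono)
  also have "\<dots> = r * sum w A" by (simp add: sum_distrib_left)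
  finally show ?thesis using assms(3) by (simp add: divide_less_eq)
qed

lemma sum_scaled_divide_sum:
  fixes w :: "'a \<Rightarrow> real"
  assumes "sum w A \<noteq> 0"
  shows "(\<Sum>a\<in>A. r * w a) / sum w A = r"
  using assms by (simp add: sum_distrib_left[symmetric])

theorem theorem2:
  fixes I :: "'u set" and p dp :: "'u \<Rightarrow> real" and \<alpha> \<beta> :: real
  assumes "finite I"
    and "\<And>i. i \<in> I \<Longrightarrow> 0 \<le> p i \<and> p i \<le> 1"
    and "\<And>i. i \<in> I \<Longrightarrow> 0 \<le> p i - dp i \<and> p i - dp i \<le> 1"
    and "\<alpha> > 0" and "\<beta> > 0"
    and "(\<Sum>j\<in>{i\<in>I. \<alpha> * p i > \<beta> * dp i}. p j) = (\<Sum>k\<in>{i\<in>I. \<alpha> * p i < \<beta> * dp i}. p k)"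
    and "(\<Sum>j\<in>{i\<in>I. \<alpha> * p i > \<beta> * dp i}. p j) > 0"
  shows "(\<Sum>j\<in>{i\<in>I. \<alpha> * p i > \<beta> * dp i}. \<beta> * dp j) / (\<Sum>j\<in>{i\<in>I. \<alpha> * p i > \<beta> * dp i}. p j)
       < (\<Sum>k\<in>{i\<in>I. \<alpha> * p i < \<beta> * dp i}. \<alpha> * p k) / (\<Sum>k\<in>{i\<in>I. \<alpha> * p i < \<beta> * dp i}. p k)"
proof -
  let ?J = "{i\<in>I. \<alpha> * p i > \<beta> * dp i}"
  let ?K = "{i\<in>I. \<alpha> * p i < \<beta> * dp i}"
  have "(\<Sum>j\<in>?J. \<beta> * dp j) / (\<Sum>j\<in>?J. p j) < \<alpha>"
    using assms(1,7) by (intro sum_divide_less_if_pointwise_less) auto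
  also have "\<alpha> = (\<Sum>k\<in>?K. \<alpha> * p k) / (\<Sum>k\<in>?K. p k)"
    using assms(6,7) by (simp add: sum_scaled_divide_sum)
  finally show ?thesis .
qed

end
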